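(* Let $r=3$ and $Q=\lfloor k^5/(2^{13}\cdot 10^{39})\rfloor$. For all sufficiently large $k$, in the random $3$-coloring of $[1,Q]$ described in the context, the probability that there exists a monochromatic ascending wave of length $\lfloor k/4\rfloor$ whose first difference is greater than $6b$ and whose last difference is smaller than $\frac{kb}{4\cdot 10^{14}}$ is less than $\frac12$.
   Context: Ascending wave: positive integers $w_1<\dots<w_n$ with $w_{i+1}-w_i\ge w_i-w_{i-1}$ for $2\le i\le n-1$; $AW(k;r)$ is the least $N$ such that every $r$-coloring of $\{1,\dots,N\}$ has a monochromatic $k$-term ascending wave. Let $r=3$, $K=\lfloor k/80\rfloor$ and $b=AW(K;2)-1$. For each $i\in\{0,1,2\}$ fix a coloring $\gamma_i$ of $\{1,\dots,b\}$ with the two colors $\{0,1,2\}\setminus\{i\}$ having no monochromatic $K$-term ascending wave. Let $A$ be the $9\times 6$ matrix with rows indexed by pairs $(j,i)$, $j\in\{0,1,2\}$, $i\in\{1,2,3\}$, whose row $(j,i)$ has entry $(m+j)\bmod 3$ in position $2m+1$ and entry $(i+m-1+j)\bmod 3$ in position $2m+2$, for $m=0,1,2$. Partition $[1,Q]$ into consecutive blocks of $b$ integers each (the last possibly partial), grouped into consecutive groups of $6$ blocks. For each group independently choose a row $(s_1,\dots,s_6)$ of $A$ uniformly at random and color the $l$-th block of the group by $\gamma_{s_l}$ (translated to that block). *)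

theory Defs
  imports "HOL-Probability.Probability"
begin

definition ascending_wave :: "nat \<Rightarrow> (nat \<Rightarrow> nat) \<Rightarrow> bool" where
  "ascending_wave n w \<longleftrightarrow>
     (\<forall>i<n. 0 < w i) \<and>
     (\<forall>i. i + 1 < n \<longrightarrow> w i < w (i + 1)) \<and>
     (\<forall>i. i + 2 < n \<longrightarrow> w (i + 1) - w i \<le> w (i + 2) - w (i + 1))"

definition mono_wave :: "(nat \<Rightarrow> nat) \<Rightarrow> nat \<Rightarrow> nat \<Rightarrow> (nat \<Rightarrow> nat) \<Rightarrow> bool" where
  "mono_wave c N n w \<longleftrightarrow> ascending_wave n w \<and>
     (\<forall>i<n. w i \<in> {1..N}) \<and> (\<forall>i<n. c (w i) = c (w 0))"

definition AW :: "nat \<Rightarrow> nat \<Rightarrow> nat" where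
  "AW k r = (LEAST N. \<forall>c. (\<forall>x\<in>{1..N}. c x < r) \<longrightarrow> (\<exists>w. mono_wave c N k w))"

text \<open>Entry of row (j,i) of the 9x6 matrix A at (0-based) position l, l < 6:
  position 2m+1 (l = 2m) has (m+j) mod 3, position 2m+2 (l = 2m+1) has (i+m-1+j) mod 3.\<close>
definition A_entry :: "nat \<Rightarrow> nat \<Rightarrow> nat \<Rightarrow> nat" where
  "A_entry j i l = (if even l then (l div 2 + j) mod 3 else (i + l div 2 - 1 + j) mod 3)"

definition A_rows :: "(nat \<times> nat) set" where
  "A_rows = {0,1,2} \<times> {1,2,3}"

text \<open>The block coloring of [1,Q] determined by a choice rho of a row per group:
  x lies in block (x-1) div b, which is block number ((x-1) div b) mod 6 (0-based)
  of group (x-1) div (6b); it is colored by gamma_{s_l} translated to that block.\<close>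
definition block_coloring ::
    "nat \<Rightarrow> (nat \<Rightarrow> nat \<Rightarrow> nat) \<Rightarrow> (nat \<Rightarrow> nat \<times> nat) \<Rightarrow> nat \<Rightarrow> nat" where
  "block_coloring b \<gamma> \<rho> x =
     (let g = (x - 1) div (6 * b); l = ((x - 1) div b) mod 6 in
      \<gamma> (A_entry (fst (\<rho> g)) (snd (\<rho> g)) l) ((x - 1) mod b + 1))"

definition num_groups :: "nat \<Rightarrow> nat \<Rightarrow> nat" where
  "num_groups Q b = (Q + 6 * b - 1) div (6 * b)"

definition row_choices :: "nat \<Rightarrow> (nat \<Rightarrow> nat \<times> nat) pmf" where
  "row_choices G = pmf_of_set (PiE {0..<G} (\<lambda>_. A_rows))"

end

theory Submission
  imports Defs "HOL-Real_Asymp.Real_Asymp"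
begin

text \<open>
  Cut a monochromatic wave whose first gap exceeds 6b into W, about k/400, segments of
  n = 100 consecutive terms and record its sketch: its color c, the start of every segment to
  within b/3, and the gap there to within b/(3n). Gaps are non-decreasing and the last one is
  below kb/(4 10^14), so the rounded gaps increase at most V, about k/10^12, times, and there
  are at most poly(k) 2^(3W+2V) sketches. On each of the at least W - V segments of constant
  rounded gap the sketch predicts the block of every term up to one neighbour. A block colored
  by \<open>\<gamma>\<^sub>s\<close> misses color s, so the chosen rows cannot make both predicted blocks miss c,
  while two adjacent blocks both miss c with probability at least 1/9. Since all gaps exceed 6b,
  the terms of even index give such constraints in pairwise distinct groups of six blocks,
  whose rows are independent. Hence each sketch is realised with probability at most
  (8/9)^(50(W - V)), and summing over sketches gives 6144 k^6 / 2^(k/100) < 1/2 for large k.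
\<close>

lemma card_PiE_filter_conj:
  assumes P: "\<And>\<rho> \<rho>'. (\<forall>x\<in>H. \<rho> x = \<rho>' x) \<Longrightarrow> P \<rho> = P \<rho>'"
    and Q: "\<And>\<rho> \<rho>'. (\<forall>x. x \<notin> H \<longrightarrow> \<rho> x = \<rho>' x) \<Longrightarrow> Q \<rho> = Q \<rho>'"
  shows "card {\<rho>\<in>PiE I F. P \<rho> \<and> Q \<rho>} * card (PiE I F)
       = card {\<rho>\<in>PiE I F. P \<rho>} * card {\<rho>\<in>PiE I F. Q \<rho>}"
proof -
  define \<Omega> where "\<Omega> = PiE I F"
  define mix where "mix = (\<lambda>a b x. if x \<in> H then a x else (b x :: 'b))"
  define swap where "swap = (\<lambda>(a, b). (mix a b, mix b a))"
  have mix_in: "mix a b \<in> \<Omega>" if "a \<in> \<Omega>" "b \<in> \<Omega>" for a b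
    using that by (auto simp: \<Omega>_def mix_def PiE_def Pi_def extensional_def)
  have P_mix: "P (mix a b) = P a" for a b by (rule P) (simp add: mix_def)
  have Q_mix: "Q (mix a b) = Q b" for a b by (rule Q) (simp add: mix_def)
  \<comment> \<open>Exchanging the \<open>H\<close>-coordinates of two points is an involution of \<open>\<Omega> \<times> \<Omega>\<close>.\<close>
  have "bij_betw swap ({\<rho>\<in>\<Omega>. P \<rho>} \<times> {\<rho>\<in>\<Omega>. Q \<rho>}) ({\<rho>\<in>\<Omega>. P \<rho> \<and> Q \<rho>} \<times> \<Omega>)"
  proof (rule bij_betw_byWitness[where f' = swap])
    have swap_swap: "swap (swap z) = z" for z
      by (cases z) (auto simp: swap_def mix_def fun_eq_iff)
    then show "\<forall>z\<in>{\<rho>\<in>\<Omega>. P \<rho>} \<times> {\<rho>\<in>\<Omega>. Q \<rho>}. swap (swap z) = z"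
      and "\<forall>z\<in>{\<rho>\<in>\<Omega>. P \<rho> \<and> Q \<rho>} \<times> \<Omega>. swap (swap z) = z" by simp_all
    show "swap ` ({\<rho>\<in>\<Omega>. P \<rho>} \<times> {\<rho>\<in>\<Omega>. Q \<rho>}) \<subseteq> {\<rho>\<in>\<Omega>. P \<rho> \<and> Q \<rho>} \<times> \<Omega>"
      and "swap ` ({\<rho>\<in>\<Omega>. P \<rho> \<and> Q \<rho>} \<times> \<Omega>) \<subseteq> {\<rho>\<in>\<Omega>. P \<rho>} \<times> {\<rho>\<in>\<Omega>. Q \<rho>}"
      by (auto simp: swap_def mix_in P_mix Q_mix)
  qed
  then have "card ({\<rho>\<in>\<Omega>. P \<rho>} \<times> {\<rho>\<in>\<Omega>. Q \<rho>}) = card ({\<rho>\<in>\<Omega>. P \<rho> \<and> Q \<rho>} \<times> \<Omega>)"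
    by (rule bij_betw_same_card)
  then show ?thesis
    unfolding \<Omega>_def card_cartesian_product by simp
qed

lemma card_PiE_filter_Ball_le:
  fixes q :: real
  assumes fin: "finite (PiE I F)" and "finite J" and "0 \<le> q"
    and disjoint: "\<And>i j. i \<in> J \<Longrightarrow> j \<in> J \<Longrightarrow> i \<noteq> j \<Longrightarrow> H i \<inter> H j = {}"
    and local: "\<And>j \<rho> \<rho>'. j \<in> J \<Longrightarrow> (\<forall>x\<in>H j. \<rho> x = \<rho>' x) \<Longrightarrow> T j \<rho> = T j \<rho>'"
    and density: "\<And>j. j \<in> J \<Longrightarrow> real (card {\<rho>\<in>PiE I F. T j \<rho>}) \<le> q * real (card (PiE I F))"
  shows "real (card {\<rho>\<in>PiE I F. \<forall>j\<in>J. T j \<rho>}) \<le> q ^ card J * real (card (PiE I F))"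
  using \<open>finite J\<close> disjoint local density
proof (induction J rule: finite_induct)
  case empty
  then show ?case by simp
next
  case (insert j J)
  define N where "N = real (card (PiE I F))"
  have IH: "real (card {\<rho>\<in>PiE I F. \<forall>i\<in>J. T i \<rho>}) \<le> q ^ card J * N"
    unfolding N_def by (rule insert.IH) (use insert.prems in blast)+
  have "T i \<rho> = T i \<rho>'" if "\<forall>x. x \<notin> H j \<longrightarrow> \<rho> x = \<rho>' x" "i \<in> J" for i \<rho> \<rho>'
    using insert.prems(1)[of i j] insert.prems(2)[of i \<rho> \<rho>'] insert.hyps(2) that by blast
  then have split: "card {\<rho>\<in>PiE I F. T j \<rho> \<and> (\<forall>i\<in>J. T i \<rho>)} * card (PiE I F)
      = card {\<rho>\<in>PiE I F. T j \<rho>} * card {\<rho>\<in>PiE I F. \<forall>i\<in>J. T i \<rho>}"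
    by (intro card_PiE_filter_conj[where H = "H j"]) (use insert.prems(2) in blast)+
  show ?case
  proof (cases "N = 0")
    case True
    then show ?thesis using fin by (simp add: N_def)
  next
    case False
    have "real (card {\<rho>\<in>PiE I F. T j \<rho> \<and> (\<forall>i\<in>J. T i \<rho>)}) * N
        = real (card {\<rho>\<in>PiE I F. T j \<rho>}) * real (card {\<rho>\<in>PiE I F. \<forall>i\<in>J. T i \<rho>})"
      unfolding N_def of_nat_mult[symmetric] split ..
    also have "\<dots> \<le> (q * N) * (q ^ card J * N)"
      using insert.prems(3)[of j] IH \<open>0 \<le> q\<close> by (intro mult_mono) (auto simp: N_def)
    finally have "real (card {\<rho>\<in>PiE I F. T j \<rho> \<and> (\<forall>i\<in>J. T i \<rho>)}) \<le> q ^ Suc (card J) * N"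
      using False by (simp add: N_def mult_le_cancel_right algebra_simps)
    then show ?thesis using insert.hyps by (simp add: N_def)
  qed
qed

lemma card_PiE_filter_coord:
  assumes "finite I" "g \<in> I" "S \<subseteq> F g"
  shows "card {\<rho>\<in>PiE I F. \<rho> g \<in> S} * card (F g) = card S * card (PiE I F)"
proof -
  have "{\<rho>\<in>PiE I F. \<rho> g \<in> S} = PiE I (F(g := S))"
    using assms(2,3) by (auto simp: PiE_def Pi_def)
  moreover have "card (PiE I G) = card (G g) * (\<Prod>i\<in>I - {g}. card (F i))"
    if "\<And>i. i \<noteq> g \<Longrightarrow> G i = F i" for G
    using assms(1,2) that by (simp add: card_PiE prod.remove)
  ultimately show ?thesis by simp
qed

lemma card_lists_sum_le: "card {xs :: nat list. length xs = m \<and> sum_list xs \<le> S} \<le> 2 ^ (m + S)"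
proof (induction m arbitrary: S)
  case 0
  have "{xs :: nat list. length xs = 0 \<and> sum_list xs \<le> S} = {[]}" by auto
  then show ?case by simp
next
  case (Suc m)
  have "{xs :: nat list. length xs = Suc m \<and> sum_list xs \<le> S}
      = (\<Union>a\<le>S. Cons a ` {xs. length xs = m \<and> sum_list xs \<le> S - a})"
  proof (intro equalityI subsetI)
    fix xs assume "xs \<in> {xs :: nat list. length xs = Suc m \<and> sum_list xs \<le> S}"
    then obtain a ys where "xs = a # ys" "length ys = m" "a + sum_list ys \<le> S"
      by (auto simp: length_Suc_conv)
    then show "xs \<in> (\<Union>a\<le>S. Cons a ` {xs. length xs = m \<and> sum_list xs \<le> S - a})"
      by (intro UN_I[of a]) auto
  qed auto
  then have "card {xs :: nat list. length xs = Suc m \<and> sum_list xs \<le> S}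
      \<le> (\<Sum>a\<le>S. card (Cons a ` {xs. length xs = m \<and> sum_list xs \<le> S - a}))"
    by (simp add: card_UN_le)
  also have "\<dots> \<le> (\<Sum>a\<le>S. 2 ^ m * 2 ^ (S - a))"
    using Suc.IH by (intro sum_mono) (simp add: card_image power_add)
  also have "\<dots> = 2 ^ m * (\<Sum>a<Suc S. 2 ^ a)"
    using sum.nat_diff_reindex[of "\<lambda>a. (2::nat) ^ a" "Suc S"]
    by (simp add: lessThan_Suc_atMost flip: sum_distrib_left)
  also have "\<dots> = 2 ^ m * (2 ^ Suc S - 1)"
    by (simp only: atLeast0LessThan[symmetric] sum_power2)
  also have "\<dots> \<le> 2 ^ m * 2 ^ Suc S" by simp
  also have "\<dots> = 2 ^ (Suc m + S)" by (simp add: power_add)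
  finally show ?case .
qed

lemma finite_lists_sum_le: "finite {xs :: nat list. length xs = m \<and> sum_list xs \<le> S}"
proof (rule finite_subset)
  show "{xs :: nat list. length xs = m \<and> sum_list xs \<le> S} \<subseteq> {xs. set xs \<subseteq> {0..S} \<and> length xs = m}"
    using member_le_sum_list by fastforce
qed (simp add: finite_lists_length_eq)

lemma prob_pmf_of_set_union_bound:
  fixes q :: real
  assumes "finite \<Omega>" and "\<Omega> \<noteq> {}" and "finite Z"
    and cover: "\<And>\<omega>. \<omega> \<in> \<Omega> \<Longrightarrow> \<omega> \<in> E \<Longrightarrow> \<exists>z\<in>Z. \<omega> \<in> T z"
    and each: "\<And>z. z \<in> Z \<Longrightarrow> real (card (\<Omega> \<inter> T z)) \<le> q * real (card \<Omega>)"
  shows "measure_pmf.prob (pmf_of_set \<Omega>) E \<le> real (card Z) * q"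
proof -
  have "card (\<Omega> \<inter> E) \<le> card (\<Union>z\<in>Z. \<Omega> \<inter> T z)"
    using cover \<open>finite \<Omega>\<close> by (intro card_mono) auto
  also have "\<dots> \<le> (\<Sum>z\<in>Z. card (\<Omega> \<inter> T z))"
    by (rule card_UN_le[OF \<open>finite Z\<close>])
  finally have "real (card (\<Omega> \<inter> E)) \<le> (\<Sum>z\<in>Z. real (card (\<Omega> \<inter> T z)))"
    by (simp flip: of_nat_sum)
  also have "\<dots> \<le> (\<Sum>z\<in>Z. q * real (card \<Omega>))"
    by (intro sum_mono each)
  finally show ?thesis
    using assms(1,2) by (simp add: measure_pmf_of_set divide_le_eq card_gt_0_iff mult.assoc)
qed

section \<open>The matrix \<open>A\<close> and the random block coloring\<close>

lemma A_rows_eq: "A_rows = {(0,1),(0,2),(0,3),(1,1),(1,2),(1,3),(2,1),(2,2),(2,3)}"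
  by (auto simp: A_rows_def)

lemma mem_A_rows_iff: "(j, i) \<in> A_rows \<longleftrightarrow> j < 3 \<and> 1 \<le> i \<and> i \<le> 3"
proof -
  have j: "j \<in> {0,1,2} \<longleftrightarrow> j < 3" and i: "i \<in> {1,2,3} \<longleftrightarrow> 1 \<le> i \<and> i \<le> 3" for j i :: nat
    by auto
  show ?thesis unfolding A_rows_def mem_Sigma_iff j i ..
qed

lemma card_A_rows: "card A_rows = 9"
  by (simp add: A_rows_eq)

definition A_row :: "nat \<times> nat \<Rightarrow> nat \<Rightarrow> nat" where
  "A_row r = A_entry (fst r) (snd r)"

lemma A_row_less_3: "A_row r l < 3"
  by (simp add: A_row_def A_entry_def)

lemma A_row_adjacent_entries:
  "A_row (j, 1 + l mod 2) l = ((l + 1) div 2 + j) mod 3"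
  "A_row (j, 1 + l mod 2) (Suc l) = ((l + 1) div 2 + j) mod 3"
proof -
  obtain m where "l = 2 * m \<or> l = 2 * m + 1" by (metis oddE evenE)
  then show "A_row (j, 1 + l mod 2) l = ((l + 1) div 2 + j) mod 3"
    "A_row (j, 1 + l mod 2) (Suc l) = ((l + 1) div 2 + j) mod 3"
    by (auto simp: A_row_def A_entry_def)
qed

lemma A_rows_adjacent_pair:
  assumes "c < 3"
  shows "\<exists>r\<in>A_rows. A_row r l = c \<and> A_row r (Suc l) = c"
proof
  define j where "j = (c + 2 * ((l + 1) div 2)) mod 3"
  have "((l + 1) div 2 + j) mod 3 = (c + 3 * ((l + 1) div 2)) mod 3"
    unfolding j_def by (simp add: mod_add_right_eq algebra_simps)
  also have "\<dots> = c" using assms by simp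
  finally have entry: "((l + 1) div 2 + j) mod 3 = c" .
  show "A_row (j, 1 + l mod 2) l = c \<and> A_row (j, 1 + l mod 2) (Suc l) = c"
    unfolding A_row_adjacent_entries entry by simp
  show "(j, 1 + l mod 2) \<in> A_rows"
    unfolding mem_A_rows_iff j_def by simp
qed

lemma card_A_rows_first_column:
  assumes "c < 3"
  shows "card {r\<in>A_rows. A_row r 0 = c} = 3"
proof -
  have "{r\<in>A_rows. A_row r 0 = c} = {c} \<times> {1,2,3}"
    using assms by (auto simp: A_rows_def A_row_def A_entry_def)
  then show ?thesis by simp
qed

lemma card_A_rows_last_column:
  assumes "c < 3"
  shows "card {r\<in>A_rows. A_row r 5 = c} = 3"
proof -
  have row: "A_row (j, i) 5 = (i + 1 + j) mod 3" for j i
    by (simp add: A_row_def A_entry_def)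
  have col0: "{r\<in>A_rows. A_row r 5 = 0} = {(0,2),(1,1),(2,3)}"
    and col1: "{r\<in>A_rows. A_row r 5 = 1} = {(0,3),(1,2),(2,1)}"
    and col2: "{r\<in>A_rows. A_row r 5 = 2} = {(0,1),(1,3),(2,2)}"
    unfolding A_rows_eq by (auto simp: row)
  consider "c = 0" | "c = 1" | "c = 2" using assms by linarith
  then show ?thesis
  proof cases
    case 1 show ?thesis unfolding \<open>c = 0\<close> col0 by simp
  next
    case 2 show ?thesis unfolding \<open>c = 1\<close> col1 by simp
  next
    case 3 show ?thesis unfolding \<open>c = 2\<close> col2 by simp
  qed
qed

definition block_index :: "nat \<Rightarrow> nat \<Rightarrow> nat" where
  "block_index b x = (x - 1) div b"

definition missing_color :: "(nat \<Rightarrow> nat \<times> nat) \<Rightarrow> nat \<Rightarrow> nat" where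
  "missing_color \<rho> \<beta> = A_row (\<rho> (\<beta> div 6)) (\<beta> mod 6)"

lemma block_coloring_eq:
  "block_coloring b \<gamma> \<rho> x = \<gamma> (missing_color \<rho> (block_index b x)) ((x - 1) mod b + 1)"
  by (simp add: block_coloring_def missing_color_def block_index_def A_row_def Let_def
      div_mult2_eq mult.commute)

lemma block_coloring_avoids_missing_color:
  assumes "0 < b" and "\<forall>i<3. \<forall>x\<in>{1..b}. \<gamma> i x \<in> {0,1,2} - {i}"
  shows "block_coloring b \<gamma> \<rho> x \<noteq> missing_color \<rho> (block_index b x)"
    and "block_coloring b \<gamma> \<rho> x < 3"
proof -
  have "(x - 1) mod b + 1 \<in> {1..b}" using \<open>0 < b\<close> by (simp add: Suc_leI)
  then have "\<gamma> (missing_color \<rho> (block_index b x)) ((x - 1) mod b + 1)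
      \<in> {0,1,2} - {missing_color \<rho> (block_index b x)}"
    using assms(2) by (simp add: missing_color_def A_row_less_3)
  then show "block_coloring b \<gamma> \<rho> x \<noteq> missing_color \<rho> (block_index b x)"
    and "block_coloring b \<gamma> \<rho> x < 3"
    by (auto simp: block_coloring_eq)
qed

definition admits_color :: "(nat \<Rightarrow> nat \<times> nat) \<Rightarrow> nat \<Rightarrow> nat \<Rightarrow> bool" where
  "admits_color \<rho> c \<beta> \<longleftrightarrow> missing_color \<rho> \<beta> \<noteq> c \<or> missing_color \<rho> (Suc \<beta>) \<noteq> c"

abbreviation row_space :: "nat \<Rightarrow> (nat \<Rightarrow> nat \<times> nat) set" where
  "row_space G \<equiv> PiE {0..<G} (\<lambda>_. A_rows)"

lemma finite_row_space: "finite (row_space G)"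
  by (simp add: finite_PiE A_rows_eq)

lemma card_row_space_pos: "0 < card (row_space G)"
  by (simp add: card_PiE card_A_rows)

lemma card_row_space_coord:
  assumes "g < G" and "S \<subseteq> A_rows"
  shows "9 * card {\<rho>\<in>row_space G. \<rho> g \<in> S} = card S * card (row_space G)"
  using card_PiE_filter_coord[of "{0..<G}" g S "\<lambda>_. A_rows"] assms
  by (simp add: card_A_rows mult.commute)

lemma card_row_space_coord_pair:
  assumes "g < G" and "g' < G" and "g \<noteq> g'" and "S \<subseteq> A_rows" and "S' \<subseteq> A_rows"
  shows "81 * card {\<rho>\<in>row_space G. \<rho> g \<in> S \<and> \<rho> g' \<in> S'} = card S * card S' * card (row_space G)"
proof -
  define X where "X = card {\<rho>\<in>row_space G. \<rho> g \<in> S \<and> \<rho> g' \<in> S'}"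
  have split: "X * card (row_space G)
      = card {\<rho>\<in>row_space G. \<rho> g \<in> S} * card {\<rho>\<in>row_space G. \<rho> g' \<in> S'}"
    unfolding X_def using \<open>g \<noteq> g'\<close> by (intro card_PiE_filter_conj[where H = "{g}"]) auto
  have "(81 * X) * card (row_space G) = 81 * (X * card (row_space G))" by simp
  also have "\<dots> = (9 * card {\<rho>\<in>row_space G. \<rho> g \<in> S}) * (9 * card {\<rho>\<in>row_space G. \<rho> g' \<in> S'})"
    unfolding split by simp
  also have "\<dots> = (card S * card S' * card (row_space G)) * card (row_space G)"
    unfolding card_row_space_coord[OF assms(1,4)] card_row_space_coord[OF assms(2,5)] by simp
  finally show ?thesis using card_row_space_pos[of G] unfolding X_def by simp
qed

lemma card_row_space_missing_pair:
  assumes "c < 3" and "Suc \<beta> div 6 < G"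
  shows "card (row_space G)
      \<le> 9 * card {\<rho>\<in>row_space G. missing_color \<rho> \<beta> = c \<and> missing_color \<rho> (Suc \<beta>) = c}"
proof -
  define g where "g = \<beta> div 6"
  define E where "E = {\<rho>\<in>row_space G. missing_color \<rho> \<beta> = c \<and> missing_color \<rho> (Suc \<beta>) = c}"
  have "g \<le> Suc \<beta> div 6" unfolding g_def by (simp add: div_le_mono)
  then have "g < G" using assms(2) by linarith
  consider "\<beta> mod 6 < 5" | "\<beta> mod 6 = 5" by linarith
  then show ?thesis
  proof cases
    case 1
    then have next_block: "Suc \<beta> div 6 = g" "Suc \<beta> mod 6 = Suc (\<beta> mod 6)"
      unfolding g_def by presburger+
    define S where "S = {r\<in>A_rows. A_row r (\<beta> mod 6) = c \<and> A_row r (Suc (\<beta> mod 6)) = c}"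
    have "S \<noteq> {}" using A_rows_adjacent_pair[OF \<open>c < 3\<close>] unfolding S_def by blast
    then have "1 \<le> card S" unfolding S_def by (simp add: Suc_le_eq card_gt_0_iff A_rows_eq)
    have E_eq: "E = {\<rho>\<in>row_space G. \<rho> g \<in> S}"
      using \<open>g < G\<close> by (auto simp: E_def S_def missing_color_def next_block g_def)
    have "9 * card E = card S * card (row_space G)"
      unfolding E_eq by (rule card_row_space_coord[OF \<open>g < G\<close>]) (simp add: S_def)
    then show ?thesis using \<open>1 \<le> card S\<close> unfolding E_def
      by (metis mult_le_mono1 mult_1)
  next
    case 2
    then have next_block: "Suc \<beta> div 6 = Suc g" "Suc \<beta> mod 6 = 0"
      unfolding g_def by presburger+
    define S5 where "S5 = {r\<in>A_rows. A_row r 5 = c}"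
    define S0 where "S0 = {r\<in>A_rows. A_row r 0 = c}"
    have "E = {\<rho>\<in>row_space G. \<rho> g \<in> S5 \<and> \<rho> (Suc g) \<in> S0}"
      using \<open>g < G\<close> assms(2) 2 by (auto simp: E_def S5_def S0_def missing_color_def next_block g_def)
    moreover have "81 * card {\<rho>\<in>row_space G. \<rho> g \<in> S5 \<and> \<rho> (Suc g) \<in> S0}
        = card S5 * card S0 * card (row_space G)"
      using \<open>g < G\<close> assms(2) by (intro card_row_space_coord_pair) (auto simp: S5_def S0_def next_block)
    moreover have "card S5 = 3" "card S0 = 3"
      unfolding S5_def S0_def using \<open>c < 3\<close> card_A_rows_last_column card_A_rows_first_column by blast+
    ultimately have "81 * card E = 9 * card (row_space G)" by simp
    then show ?thesis unfolding E_def by simp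
  qed
qed

lemma card_admits_color_le:
  assumes "c < 3" and "Suc \<beta> div 6 < G"
  shows "real (card {\<rho>\<in>row_space G. admits_color \<rho> c \<beta>}) \<le> 8/9 * real (card (row_space G))"
proof -
  define E where "E = {\<rho>\<in>row_space G. missing_color \<rho> \<beta> = c \<and> missing_color \<rho> (Suc \<beta>) = c}"
  have "{\<rho>\<in>row_space G. admits_color \<rho> c \<beta>} = row_space G - E"
    by (auto simp: admits_color_def E_def)
  then have "real (card {\<rho>\<in>row_space G. admits_color \<rho> c \<beta>}) = real (card (row_space G)) - real (card E)"
    using finite_row_space by (simp add: E_def card_Diff_subset of_nat_diff card_mono)
  moreover have "real (card (row_space G)) \<le> 9 * real (card E)"
    using card_row_space_missing_pair[OF assms] unfolding E_def by linarith
  ultimately show ?thesis by linarith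
qed

lemma card_admits_color_all_le:
  assumes "finite B" and "c < 3"
    and range: "\<And>\<beta>. \<beta> \<in> B \<Longrightarrow> Suc \<beta> div 6 < G"
    and separated: "\<And>\<beta> \<beta>'. \<beta> \<in> B \<Longrightarrow> \<beta>' \<in> B \<Longrightarrow> \<beta> < \<beta>' \<Longrightarrow> \<beta> + 7 \<le> \<beta>'"
  shows "real (card {\<rho>\<in>row_space G. \<forall>\<beta>\<in>B. admits_color \<rho> c \<beta>})
      \<le> (8/9) ^ card B * real (card (row_space G))"
proof (rule card_PiE_filter_Ball_le[where H = "\<lambda>\<beta>. {\<beta> div 6, Suc \<beta> div 6}"])
  have groups_disjoint: "{\<beta> div 6, Suc \<beta> div 6} \<inter> {\<beta>' div 6, Suc \<beta>' div 6} = {}"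
    if "\<beta> + 7 \<le> \<beta>'" for \<beta> \<beta>' :: nat
  proof -
    have disjoint: "{a, a'} \<inter> {d, d'} = {}" if "a \<le> a'" "a' < d" "d \<le> d'" for a a' d d' :: nat
      using that by auto
    have "Suc \<beta> div 6 < \<beta>' div 6" using \<open>\<beta> + 7 \<le> \<beta>'\<close> by linarith
    then show ?thesis by (intro disjoint) (simp_all add: div_le_mono)
  qed
  show "{\<beta> div 6, Suc \<beta> div 6} \<inter> {\<beta>' div 6, Suc \<beta>' div 6} = {}"
    if "\<beta> \<in> B" "\<beta>' \<in> B" "\<beta> \<noteq> \<beta>'" for \<beta> \<beta>'
    using that separated groups_disjoint by (metis Int_commute linorder_neq_iff)
  show "admits_color \<rho> c \<beta> = admits_color \<rho>' c \<beta>"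
    if "\<forall>x\<in>{\<beta> div 6, Suc \<beta> div 6}. \<rho> x = \<rho>' x" for \<beta> \<rho> \<rho>'
    using that by (simp add: admits_color_def missing_color_def)
qed (use assms finite_row_space card_admits_color_le in auto)

section \<open>Steep ascending waves\<close>

lemma div_add_bounds:
  fixes u d b E E' :: nat
  assumes "0 < b" and "b * E \<le> d" and "d \<le> b * (E' + 1)"
  shows "u div b + E \<le> (u + d) div b" and "(u + d) div b \<le> u div b + E' + 1"
proof -
  have "u div b + E = (u + b * E) div b" using \<open>0 < b\<close> by simp
  also have "\<dots> \<le> (u + d) div b" using assms(2) by (intro div_le_mono) simp
  finally show "u div b + E \<le> (u + d) div b" .
  have "(u + d) div b \<le> (u + b * (E' + 1)) div b" using assms(3) by (intro div_le_mono) simp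
  also have "\<dots> = u div b + E' + 1" using div_mult_self2[of b u "E' + 1"] \<open>0 < b\<close> by simp
  finally show "(u + d) div b \<le> u div b + E' + 1" .
qed

text \<open>If \<open>3n(X - x)\<close> lies between \<open>bjE\<close> and \<open>bj(E + 1)\<close>, then \<open>X/b\<close> lies in
  \<open>[Y, Y + 1/3 + j/(3n))\<close> for \<open>Y = (n\<lfloor>3x/b\<rfloor> + jE)/(3n)\<close>, so \<open>\<lfloor>X/b\<rfloor>\<close> is \<open>\<lfloor>Y\<rfloor>\<close> or \<open>\<lfloor>Y\<rfloor> + 1\<close>.\<close>

lemma div_interpolation_bounds:
  fixes x X j E n b :: nat
  assumes "0 < b" and "0 < n" and "j \<le> 2 * n" and "x \<le> X"
    and lower: "b * (j * E) \<le> 3 * n * (X - x)" and upper: "3 * n * (X - x) \<le> b * (j * (E + 1))"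
  defines "\<beta> \<equiv> (n * (3 * x div b) + j * E) div (3 * n)"
  shows "\<beta> \<le> X div b" and "X div b \<le> Suc \<beta>"
proof -
  define p where "p = 3 * x div b"
  define Y where "Y = n * p + j * E"
  have p: "b * p \<le> 3 * x" "3 * x < b + b * p"
    unfolding p_def using \<open>0 < b\<close> by (simp_all add: times_div_less_eq_dividend dividend_less_times_div)
  have X: "3 * n * X = n * (3 * x) + 3 * n * (X - x)"
    using \<open>x \<le> X\<close> by (simp add: algebra_simps)
  have "b * Y = n * (b * p) + b * (j * E)" by (simp add: Y_def algebra_simps)
  also have "\<dots> \<le> 3 * n * X" using p(1) lower X by (simp add: add_mono)
  finally have "(b * Y) div (b * (3 * n)) \<le> (3 * n * X) div (3 * n * b)"
    by (metis div_le_mono mult.commute)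
  then show "\<beta> \<le> X div b"
    using \<open>0 < b\<close> \<open>0 < n\<close> by (simp only: \<beta>_def Y_def p_def div_mult_mult1 mult_pos_pos
      zero_less_numeral neq0_conv[symmetric])
  have "3 * n * X < n * (b + b * p) + b * (j * (E + 1))"
    using p(2) upper X \<open>0 < n\<close> by (simp add: add_less_le_mono)
  also have "\<dots> = b * (Y + n + j)" by (simp add: Y_def algebra_simps)
  also have "\<dots> \<le> b * (Y + 3 * n)" using \<open>j \<le> 2 * n\<close> by simp
  finally have "(3 * n * X) div (3 * n * b) \<le> (b * (Y + 3 * n)) div (b * (3 * n))"
    by (metis div_le_mono less_imp_le mult.commute)
  also have "\<dots> = Suc \<beta>"
    using \<open>0 < b\<close> \<open>0 < n\<close> by (simp add: \<beta>_def Y_def p_def)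
  finally show "X div b \<le> Suc \<beta>"
    using \<open>0 < n\<close> by simp
qed

definition gap :: "(nat \<Rightarrow> nat) \<Rightarrow> nat \<Rightarrow> nat" where
  "gap w i = w (Suc i) - w i"

text \<open>The gap at \<open>i\<close> rounded down to a multiple of \<open>b/(3n)\<close>, and the start of the segment
  \<open>w (s n), \<dots>, w (s n + n - 1)\<close>, shifted by one and rounded down to a multiple of \<open>b/3\<close>.\<close>

definition slope :: "nat \<Rightarrow> nat \<Rightarrow> (nat \<Rightarrow> nat) \<Rightarrow> nat \<Rightarrow> nat" where
  "slope b n w i = 3 * n * gap w i div b"

definition anchor :: "nat \<Rightarrow> nat \<Rightarrow> (nat \<Rightarrow> nat) \<Rightarrow> nat \<Rightarrow> nat" where
  "anchor b n w s = 3 * (w (s * n) - 1) div b"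

locale steep_wave =
  fixes b L :: nat and w :: "nat \<Rightarrow> nat"
  assumes b_pos: "0 < b" and ascending: "ascending_wave L w" and steep_start: "6 * b < w 1 - w 0"
begin

lemma wave_pos: "i < L \<Longrightarrow> 0 < w i"
  using ascending by (simp add: ascending_wave_def)

lemma wave_increasing: "i + 1 < L \<Longrightarrow> w i < w (Suc i)"
  using ascending by (simp add: ascending_wave_def)

lemma gap_mono: "i \<le> j \<Longrightarrow> j + 2 \<le> L \<Longrightarrow> gap w i \<le> gap w j"
proof (induction j)
  case (Suc j)
  have "gap w j \<le> gap w (Suc j)"
    using ascending Suc.prems(2) by (auto simp: ascending_wave_def gap_def)
  then show ?case using Suc by (cases "i = Suc j") auto
qed simp

lemma gap_gt: "i + 2 \<le> L \<Longrightarrow> 6 * b < gap w i"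
  using gap_mono[of 0 i] steep_start by (simp add: gap_def)

lemma w_add_eq_sum_gap: "i + m < L \<Longrightarrow> w (i + m) = w i + (\<Sum>t<m. gap w (i + t))"
proof (induction m)
  case (Suc m)
  then show ?case using wave_increasing[of "i + m"] by (simp add: gap_def)
qed simp

lemma slope_mono: "i \<le> j \<Longrightarrow> j + 2 \<le> L \<Longrightarrow> slope b n w i \<le> slope b n w j"
  unfolding slope_def by (intro div_le_mono mult_le_mono2 gap_mono)

lemma slope_sum_bounds:
  assumes "a + m < L"
    and "\<And>t. t < m \<Longrightarrow> lo \<le> slope b n w (a + t) \<and> slope b n w (a + t) \<le> hi"
  shows "b * (m * lo) \<le> 3 * n * (w (a + m) - w a)"
    and "3 * n * (w (a + m) - w a) \<le> b * (m * (hi + 1))"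
proof -
  have sum: "3 * n * (w (a + m) - w a) = (\<Sum>t<m. 3 * n * gap w (a + t))"
    using w_add_eq_sum_gap[OF assms(1)] by (simp add: sum_distrib_left)
  have "b * slope b n w i \<le> 3 * n * gap w i" "3 * n * gap w i \<le> b * (slope b n w i + 1)" for i
    using dividend_less_times_div[OF b_pos, of "3 * n * gap w i"]
    by (simp_all add: slope_def times_div_less_eq_dividend)
  then have "b * lo \<le> 3 * n * gap w (a + t)" "3 * n * gap w (a + t) \<le> b * (hi + 1)" if "t < m" for t
    using assms(2)[OF that] by (meson le_trans mult_le_mono2 add_le_mono1)+
  then show "b * (m * lo) \<le> 3 * n * (w (a + m) - w a)"
    and "3 * n * (w (a + m) - w a) \<le> b * (m * (hi + 1))"
    unfolding sum using sum_mono[of "{..<m}" "\<lambda>_. b * lo"] sum_mono[of "{..<m}" _ "\<lambda>_. b * (hi + 1)"]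
    by (simp_all add: algebra_simps)
qed

lemma anchor_step:
  assumes "0 < n" and "Suc s * n + 2 \<le> L"
  shows "anchor b n w s + slope b n w (s * n) \<le> anchor b n w (Suc s)"
    and "anchor b n w (Suc s) \<le> anchor b n w s + slope b n w (Suc s * n) + 1"
proof -
  define d where "d = 3 * (w (s * n + n) - w (s * n))"
  have slopes: "slope b n w (s * n) \<le> slope b n w (s * n + t)
      \<and> slope b n w (s * n + t) \<le> slope b n w (Suc s * n)" if "t < n" for t
    using that assms(2) by (auto intro!: slope_mono)
  have "n * (b * slope b n w (s * n)) \<le> n * d" "n * d \<le> n * (b * (slope b n w (Suc s * n) + 1))"
    using slope_sum_bounds[where a = "s * n" and m = n, OF _ slopes] assms(2)
    by (simp_all add: d_def algebra_simps)
  then have d: "b * slope b n w (s * n) \<le> d" "d \<le> b * (slope b n w (Suc s * n) + 1)"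
    using \<open>0 < n\<close> by simp_all
  have "w (s * n) \<le> w (s * n + n)" "0 < w (s * n)"
    using w_add_eq_sum_gap[of "s * n" n] wave_pos[of "s * n"] assms(2) by simp_all
  then have "3 * (w (Suc s * n) - 1) = 3 * (w (s * n) - 1) + d" by (simp add: d_def algebra_simps)
  then show "anchor b n w s + slope b n w (s * n) \<le> anchor b n w (Suc s)"
    and "anchor b n w (Suc s) \<le> anchor b n w s + slope b n w (Suc s * n) + 1"
    unfolding anchor_def using div_add_bounds[OF b_pos d] by simp_all
qed

lemma block_index_predicted:
  assumes "0 < n" and "j \<le> n" and "Suc s * n + 2 \<le> L"
    and flat: "slope b n w (s * n) = slope b n w (Suc s * n)"
  defines "\<beta> \<equiv> (n * anchor b n w s + j * slope b n w (s * n)) div (3 * n)"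
  shows "\<beta> \<le> block_index b (w (s * n + j))" and "block_index b (w (s * n + j)) \<le> Suc \<beta>"
proof -
  have "slope b n w (s * n) \<le> slope b n w (s * n + t)
      \<and> slope b n w (s * n + t) \<le> slope b n w (s * n)" if "t < j" for t
    using that assms(2,3) flat slope_mono[of "s * n" "s * n + t" n]
      slope_mono[of "s * n + t" "Suc s * n" n]
    by simp
  from slope_sum_bounds[where a = "s * n" and m = j, OF _ this]
  have "b * (j * slope b n w (s * n)) \<le> 3 * n * (w (s * n + j) - w (s * n))"
    and "3 * n * (w (s * n + j) - w (s * n)) \<le> b * (j * (slope b n w (s * n) + 1))"
    using assms(2,3) by simp_all
  moreover have "w (s * n) \<le> w (s * n + j)" "0 < w (s * n)"
    using w_add_eq_sum_gap[of "s * n" j] wave_pos[of "s * n"] assms(2,3) by simp_all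
  ultimately show "\<beta> \<le> block_index b (w (s * n + j))" and "block_index b (w (s * n + j)) \<le> Suc \<beta>"
    using div_interpolation_bounds[OF b_pos \<open>0 < n\<close>, of j "w (s * n) - 1" "w (s * n + j) - 1"] assms(2)
    by (simp_all add: \<beta>_def block_index_def anchor_def)
qed

lemma block_index_add_12:
  assumes "i + 2 \<le> i'" and "i' < L"
  shows "block_index b (w i) + 12 \<le> block_index b (w i')"
proof -
  have "6 * b < gap w i" "6 * b < gap w (Suc i)" using assms by (simp_all add: gap_gt)
  moreover have "w (i + 2) = w i + gap w i + gap w (Suc i)"
    using w_add_eq_sum_gap[of i 2] assms by (simp add: numeral_2_eq_2)
  moreover obtain m where "i' = i + 2 + m" using assms(1) le_Suc_ex by blast
  then have "w (i + 2) \<le> w i'" using w_add_eq_sum_gap[of "i + 2" m] assms(2) by simp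
  ultimately have "w i - 1 + b * 12 \<le> w i' - 1" using wave_pos[of i] assms by linarith
  then have "(w i - 1 + b * 12) div b \<le> (w i' - 1) div b" by (rule div_le_mono)
  then show ?thesis using b_pos by (simp add: block_index_def)
qed

lemma block_index_Suc:
  assumes "i + 2 \<le> L"
  shows "block_index b (w i) < block_index b (w (Suc i))"
proof -
  have "w i - 1 + b * 1 \<le> w (Suc i) - 1" using gap_gt[OF assms] wave_pos[of i] assms
    by (simp add: gap_def)
  then have "(w i - 1 + b * 1) div b \<le> (w (Suc i) - 1) div b" by (rule div_le_mono)
  then show ?thesis using b_pos by (simp add: block_index_def)
qed

end

section \<open>Sketches of a wave\<close>

text \<open>A sketch \<open>(c, ps, es)\<close> of a wave consists of its color, the rounded starts \<open>ps\<close> and the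
  rounded gaps \<open>es\<close> at the starts of \<open>W + 1\<close> consecutive segments; the constraints are those
  of \<open>steep_wave.anchor_step\<close>.\<close>

definition sketches :: "nat \<Rightarrow> nat \<Rightarrow> nat \<Rightarrow> (nat \<times> nat list \<times> nat list) set" where
  "sketches Q V W = {(c, ps, es). c < 3 \<and> length ps = Suc W \<and> length es = Suc W \<and>
     ps ! 0 \<le> 3 * Q \<and> es ! W \<le> V \<and>
     (\<forall>s<W. es ! s \<le> es ! Suc s \<and> ps ! s + es ! s \<le> ps ! Suc s \<and> ps ! Suc s \<le> ps ! s + es ! Suc s + 1)}"

definition increments :: "(nat \<Rightarrow> nat) \<Rightarrow> nat list \<Rightarrow> nat \<Rightarrow> nat list" where
  "increments a xs W = map (\<lambda>t. xs ! Suc t - (xs ! t + a t)) [0..<W]"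

lemma increments_telescope:
  assumes "\<forall>t<W. xs ! t + a t \<le> xs ! Suc t"
  shows "xs ! 0 + (\<Sum>t<W. a t) + sum_list (increments a xs W) = xs ! W"
  using assms by (induction W) (auto simp: increments_def)

lemma list_eq_by_increments:
  assumes "length xs = Suc W" and "length ys = Suc W" and "xs ! 0 = ys ! 0"
    and "\<forall>t<W. xs ! t + a t \<le> xs ! Suc t" and "\<forall>t<W. ys ! t + a t \<le> ys ! Suc t"
    and "increments a xs W = increments a ys W"
  shows "xs = ys"
proof (rule nth_equalityI)
  have "xs ! t = ys ! t" if "t \<le> W" for t
    using that
  proof (induction t)
    case (Suc t)
    have "xs ! Suc t - (xs ! t + a t) = ys ! Suc t - (ys ! t + a t)"
      using arg_cong[OF assms(6), of "\<lambda>l. l ! t"] Suc.prems by (simp add: increments_def)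
    moreover have "xs ! t + a t \<le> xs ! Suc t" "ys ! t + a t \<le> ys ! Suc t"
      using assms(4,5) Suc.prems by auto
    moreover have "xs ! t = ys ! t" using Suc by simp
    ultimately show ?case by linarith
  qed (simp add: assms(3))
  then show "xs ! t = ys ! t" if "t < length xs" for t
    using that assms(1) by simp
qed (simp add: assms)

text \<open>Sketches are counted through their increments, whose sums are at most \<open>V\<close> and \<open>V + W\<close>.\<close>

definition sketch_code ::
    "nat \<Rightarrow> nat \<times> nat list \<times> nat list \<Rightarrow> nat \<times> nat \<times> nat \<times> nat list \<times> nat list" where
  "sketch_code W = (\<lambda>(c, ps, es).
     (c, ps ! 0, es ! 0, increments (\<lambda>_. 0) es W, increments ((!) es) ps W))"

lemma inj_on_sketch_code: "inj_on (sketch_code W) (sketches Q V W)"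
proof (rule inj_onI)
  fix z z' assume "z \<in> sketches Q V W" "z' \<in> sketches Q V W" "sketch_code W z = sketch_code W z'"
  moreover obtain c ps es c' ps' es' where "z = (c, ps, es)" "z' = (c', ps', es')"
    by (metis prod_cases3)
  ultimately have "(c, ps, es) \<in> sketches Q V W" "(c', ps', es') \<in> sketches Q V W"
    and code: "sketch_code W (c, ps, es) = sketch_code W (c', ps', es')" by simp_all
  then have "es = es'"
    by (intro list_eq_by_increments[of es W es' "\<lambda>_. 0"]) (auto simp: sketches_def sketch_code_def)
  moreover from this have "ps = ps'"
    using \<open>(c, ps, es) \<in> sketches Q V W\<close> \<open>(c', ps', es') \<in> sketches Q V W\<close> code
    by (intro list_eq_by_increments[of ps W ps' "(!) es"]) (auto simp: sketches_def sketch_code_def)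
  ultimately show "z = z'"
    using code \<open>z = (c, ps, es)\<close> \<open>z' = (c', ps', es')\<close> by (simp add: sketch_code_def)
qed

lemma sketch_code_mem:
  assumes "(c, ps, es) \<in> sketches Q V W"
  shows "sketch_code W (c, ps, es) \<in> {..<3} \<times> {..3 * Q} \<times> {..V}
    \<times> {xs. length xs = W \<and> sum_list xs \<le> V} \<times> {xs. length xs = W \<and> sum_list xs \<le> V + W}"
proof -
  have steps: "\<forall>t<W. es ! t + 0 \<le> es ! Suc t" "\<forall>t<W. ps ! t + es ! t \<le> ps ! Suc t"
    and "es ! W \<le> V" "c < 3" "ps ! 0 \<le> 3 * Q"
    and excess: "\<forall>t<W. ps ! Suc t \<le> ps ! t + es ! Suc t + 1"
    using assms by (auto simp: sketches_def)
  have es_sum: "es ! 0 + sum_list (increments (\<lambda>_. 0) es W) = es ! W"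
    using increments_telescope[OF steps(1)] by simp
  have "sum_list (increments ((!) es) ps W) \<le> sum_list (map (\<lambda>t. (es ! Suc t - (es ! t + 0)) + 1) [0..<W])"
    unfolding increments_def using excess by (intro sum_list_mono) auto
  also have "\<dots> = sum_list (increments (\<lambda>_. 0) es W) + W"
    by (simp add: increments_def sum_list_Suc)
  finally show ?thesis
    using es_sum \<open>es ! W \<le> V\<close> \<open>c < 3\<close> \<open>ps ! 0 \<le> 3 * Q\<close>
    by (auto simp: sketch_code_def increments_def)
qed

lemma card_sketches_le:
  "finite (sketches Q V W) \<and> card (sketches Q V W) \<le> 3 * (3 * Q + 1) * (V + 1) * 2 ^ (3 * W + 2 * V)"
proof -
  define A where "A = {xs :: nat list. length xs = W \<and> sum_list xs \<le> V}"
  define B where "B = {xs :: nat list. length xs = W \<and> sum_list xs \<le> V + W}"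
  define T where "T = {..<3::nat} \<times> {..3 * Q} \<times> {..V} \<times> A \<times> B"
  have "finite T" unfolding T_def A_def B_def by (simp add: finite_lists_sum_le)
  have code: "sketch_code W ` sketches Q V W \<subseteq> T"
  proof
    fix y assume "y \<in> sketch_code W ` sketches Q V W"
    then obtain c ps es where "(c, ps, es) \<in> sketches Q V W" "y = sketch_code W (c, ps, es)"
      by (metis imageE prod_cases3)
    then show "y \<in> T" unfolding T_def A_def B_def using sketch_code_mem by simp
  qed
  have "card (sketches Q V W) \<le> card T"
    using card_inj_on_le[OF inj_on_sketch_code code \<open>finite T\<close>] .
  also have "\<dots> = 3 * ((3 * Q + 1) * ((V + 1) * (card A * card B)))"
    unfolding T_def card_cartesian_product by simp
  also have "\<dots> \<le> 3 * ((3 * Q + 1) * ((V + 1) * (2 ^ (W + V) * 2 ^ (W + (V + W)))))"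
    unfolding A_def B_def by (intro mult_le_mono2 mult_le_mono card_lists_sum_le)
  also have "\<dots> = 3 * (3 * Q + 1) * (V + 1) * 2 ^ (W + V + (W + (V + W)))"
    by (simp only: mult.assoc power_add)
  also have "\<dots> = 3 * (3 * Q + 1) * (V + 1) * 2 ^ (3 * W + 2 * V)"
    by (rule arg_cong[where f = "\<lambda>e. 3 * (3 * Q + 1) * (V + 1) * 2 ^ e"]) simp
  finally show ?thesis
    using finite_imageD[OF finite_subset[OF code \<open>finite T\<close>] inj_on_sketch_code] by simp
qed

definition flat_segments :: "nat \<Rightarrow> nat list \<Rightarrow> nat set" where
  "flat_segments W es = {s. s < W \<and> es ! s = es ! Suc s}"

lemma card_ascents_le:
  fixes f :: "nat \<Rightarrow> nat"
  assumes "\<forall>t<W. f t \<le> f (Suc t)"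
  shows "card {t. t < W \<and> f t \<noteq> f (Suc t)} + f 0 \<le> f W"
  using assms
proof (induction W)
  case (Suc W)
  have "{t. t < Suc W \<and> f t \<noteq> f (Suc t)}
      = {t. t < W \<and> f t \<noteq> f (Suc t)} \<union> (if f W \<noteq> f (Suc W) then {W} else {})"
    by (auto simp: less_Suc_eq)
  then show ?case using Suc by (auto simp: card_insert_if)
qed simp

lemma card_flat_segments_ge:
  assumes "(c, ps, es) \<in> sketches Q V W"
  shows "W - V \<le> card (flat_segments W es)"
proof -
  have mono: "\<forall>t<W. es ! t \<le> es ! Suc t" and "es ! W \<le> V"
    using assms by (auto simp: sketches_def)
  have "{..<W} = flat_segments W es \<union> {t. t < W \<and> es ! t \<noteq> es ! Suc t}"
    "flat_segments W es \<inter> {t. t < W \<and> es ! t \<noteq> es ! Suc t} = {}"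
    by (auto simp: flat_segments_def)
  then have "W = card (flat_segments W es) + card {t. t < W \<and> es ! t \<noteq> es ! Suc t}"
    by (metis card_Un_disjoint card_lessThan finite_Un finite_lessThan)
  then show ?thesis
    using card_ascents_le[OF mono] \<open>es ! W \<le> V\<close> by linarith
qed

definition wave_sketch ::
    "nat \<Rightarrow> nat \<Rightarrow> nat \<Rightarrow> nat \<Rightarrow> (nat \<Rightarrow> nat) \<Rightarrow> nat \<times> nat list \<times> nat list" where
  "wave_sketch b n W c w =
     (c, map (anchor b n w) [0..<Suc W], map (\<lambda>s. slope b n w (s * n)) [0..<Suc W])"

text \<open>The probes are the terms of even index in the segments of constant rounded gap; the
  restriction to even indices puts distinct probes into distinct groups of blocks.\<close>

definition probe_position :: "nat \<Rightarrow> nat \<times> nat \<Rightarrow> nat" where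
  "probe_position n p = fst p * n + 2 * snd p"

definition predicted_block :: "nat \<Rightarrow> nat list \<Rightarrow> nat list \<Rightarrow> nat \<times> nat \<Rightarrow> nat" where
  "predicted_block n ps es p = (n * ps ! fst p + 2 * snd p * es ! fst p) div (3 * n)"

definition probe_blocks :: "nat \<Rightarrow> nat \<Rightarrow> nat list \<Rightarrow> nat list \<Rightarrow> nat set" where
  "probe_blocks n W ps es = predicted_block n ps es ` (flat_segments W es \<times> {..<n div 2})"

definition sketch_event :: "nat \<Rightarrow> nat \<Rightarrow> nat \<times> nat list \<times> nat list \<Rightarrow> (nat \<Rightarrow> nat \<times> nat) set" where
  "sketch_event n W = (\<lambda>(c, ps, es). {\<rho>. \<forall>\<beta>\<in>probe_blocks n W ps es. admits_color \<rho> c \<beta>})"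

lemma inj_on_probe_position: "0 < n \<Longrightarrow> inj_on (probe_position n) (F \<times> {..<n div 2})"
proof (rule inj_onI, clarify)
  fix s t s' t' assume "0 < n" "t < n div 2" "t' < n div 2"
    and eq: "probe_position n (s, t) = probe_position n (s', t')"
  then have "(s * n + 2 * t) div n = s" "(s' * n + 2 * t') div n = s'" by simp_all
  then show "s = s' \<and> t = t'" using eq by (simp add: probe_position_def)
qed

lemma probe_position_less_imp_add_2:
  assumes "even n" and "probe_position n p < probe_position n p'"
  shows "probe_position n p + 2 \<le> probe_position n p'"
proof -
  have "even (probe_position n p)" "even (probe_position n p')"
    using \<open>even n\<close> by (simp_all add: probe_position_def)
  then show ?thesis using assms(2) by (auto elim!: evenE)
qed

lemma block_index_div_6_less_num_groups:
  assumes "0 < b" and "1 \<le> x" and "x \<le> Q"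
  shows "block_index b x div 6 < num_groups Q b"
proof -
  have "block_index b x div 6 \<le> (Q - 1) div (6 * b)"
    using assms by (simp add: block_index_def div_mult2_eq mult.commute div_le_mono)
  also have "\<dots> < (Q - 1 + 6 * b) div (6 * b)" using \<open>0 < b\<close> by simp
  finally show ?thesis using assms by (simp add: num_groups_def)
qed

context steep_wave
begin

lemma wave_sketch_mem_sketches:
  assumes "0 < n" and "W * n + 2 \<le> L" and "slope b n w (L - 2) \<le> V" and "c < 3"
    and "\<forall>i<L. w i \<le> Q"
  shows "wave_sketch b n W c w \<in> sketches Q V W"
proof -
  have "w 0 \<le> Q" using assms(2,5) by simp
  then have "anchor b n w 0 \<le> 3 * Q"
    unfolding anchor_def by (intro order_trans[OF div_le_dividend]) simp
  moreover have "slope b n w (W * n) \<le> slope b n w (L - 2)"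
    using assms(2) by (intro slope_mono) auto
  then have "slope b n w (W * n) \<le> V" using assms(3) by simp
  moreover have "slope b n w (s * n) \<le> slope b n w (Suc s * n)
      \<and> anchor b n w s + slope b n w (s * n) \<le> anchor b n w (Suc s)
      \<and> anchor b n w (Suc s) \<le> anchor b n w s + slope b n w (Suc s * n) + 1" if "s < W" for s
  proof -
    have "Suc s * n + 2 \<le> L" using that assms(2) mult_le_mono1[of "Suc s" W n] by linarith
    then show ?thesis using anchor_step[OF \<open>0 < n\<close>] slope_mono[of "s * n" "Suc s * n" n] by simp
  qed
  ultimately show ?thesis
    using \<open>c < 3\<close> by (simp add: wave_sketch_def sketches_def nth_append del: upt_Suc)
qed

lemma probe_block_bounds:
  assumes "0 < n" and "W * n + 2 \<le> L" and "wave_sketch b n W c w = (c, ps, es)"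
    and p: "p \<in> flat_segments W es \<times> {..<n div 2}"
  shows "probe_position n p + 2 \<le> L"
    and "predicted_block n ps es p \<le> block_index b (w (probe_position n p))"
    and "block_index b (w (probe_position n p)) \<le> Suc (predicted_block n ps es p)"
proof -
  obtain s t where st: "p = (s, t)" "s < W" "t < n div 2" and flat: "es ! s = es ! Suc s"
    using p by (auto simp: flat_segments_def)
  have L: "Suc s * n + 2 \<le> L" using st(2) assms(2) mult_le_mono1[of "Suc s" W n] by linarith
  have lists: "ps = map (anchor b n w) [0..<Suc W]" "es = map (\<lambda>s. slope b n w (s * n)) [0..<Suc W]"
    using assms(3) by (simp_all add: wave_sketch_def)
  have "slope b n w (s * n) = slope b n w (Suc s * n)" and "ps ! s = anchor b n w s"
    using flat st(2) unfolding lists by (simp_all del: upt_Suc add: nth_map_upt)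
  then show "predicted_block n ps es p \<le> block_index b (w (probe_position n p))"
    and "block_index b (w (probe_position n p)) \<le> Suc (predicted_block n ps es p)"
    using block_index_predicted[OF \<open>0 < n\<close> _ L, of "2 * t"] st(1,2,3) lists
    by (simp_all add: predicted_block_def probe_position_def mult.commute del: upt_Suc)
  show "probe_position n p + 2 \<le> L" using L st by (simp add: probe_position_def)
qed

end

context steep_wave
begin

lemma predicted_block_add_11_le:
  assumes "0 < n" and "even n" and "W * n + 2 \<le> L" and sketch: "wave_sketch b n W c w = (c, ps, es)"
    and p: "p \<in> flat_segments W es \<times> {..<n div 2}" and p': "p' \<in> flat_segments W es \<times> {..<n div 2}"
    and less: "probe_position n p < probe_position n p'"
  shows "predicted_block n ps es p + 11 \<le> predicted_block n ps es p'"
proof -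
  note bounds = probe_block_bounds[OF \<open>0 < n\<close> \<open>W * n + 2 \<le> L\<close> sketch]
  have "probe_position n p + 2 \<le> probe_position n p'"
    using probe_position_less_imp_add_2[OF \<open>even n\<close> less] .
  then have "block_index b (w (probe_position n p)) + 12 \<le> block_index b (w (probe_position n p'))"
    using bounds(1)[OF p'] by (intro block_index_add_12) auto
  then show ?thesis using bounds(2)[OF p] bounds(3)[OF p'] by linarith
qed

lemma probe_blocks_separated:
  assumes "0 < n" and "even n" and "W * n + 2 \<le> L" and sketch: "wave_sketch b n W c w = (c, ps, es)"
  shows "\<And>\<beta> \<beta>'. \<beta> \<in> probe_blocks n W ps es \<Longrightarrow> \<beta>' \<in> probe_blocks n W ps es \<Longrightarrow> \<beta> < \<beta>'
      \<Longrightarrow> \<beta> + 7 \<le> \<beta>'"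
    and "card (probe_blocks n W ps es) = card (flat_segments W es) * (n div 2)"
proof -
  define P where "P = flat_segments W es \<times> {..<n div 2}"
  note ordered = predicted_block_add_11_le[OF assms, folded P_def]
  have apart: "predicted_block n ps es p + 11 \<le> predicted_block n ps es p'
      \<or> predicted_block n ps es p' + 11 \<le> predicted_block n ps es p"
    if p: "p \<in> P" and p': "p' \<in> P" and "p \<noteq> p'" for p p'
  proof -
    have "probe_position n p \<noteq> probe_position n p'"
      using inj_on_probe_position[OF \<open>0 < n\<close>] p p' \<open>p \<noteq> p'\<close> unfolding P_def by (meson inj_onD)
    then consider "probe_position n p < probe_position n p'" | "probe_position n p' < probe_position n p"
      by linarith
    then show ?thesis
    proof cases
      case 1
      then show ?thesis using ordered[OF p p'] by simp
    next
      case 2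
      then show ?thesis using ordered[OF p' p] by simp
    qed
  qed
  have "inj_on (predicted_block n ps es) P"
    by (rule inj_onI) (use apart in force)
  then show "card (probe_blocks n W ps es) = card (flat_segments W es) * (n div 2)"
    by (simp add: probe_blocks_def P_def[symmetric] card_image) (simp add: P_def card_cartesian_product)
  show "\<beta> + 7 \<le> \<beta>'"
    if \<beta>: "\<beta> \<in> probe_blocks n W ps es" and \<beta>': "\<beta>' \<in> probe_blocks n W ps es" and less: "\<beta> < \<beta>'"
    for \<beta> \<beta>'
  proof -
    obtain p p' where "p \<in> P" "p' \<in> P" "\<beta> = predicted_block n ps es p" "\<beta>' = predicted_block n ps es p'"
      using \<beta> \<beta>' unfolding probe_blocks_def P_def by blast
    then show ?thesis using less apart[of p p'] by (cases "p = p'") auto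
  qed
qed

lemma probe_blocks_in_range:
  assumes "0 < n" and "W * n + 2 \<le> L" and sketch: "wave_sketch b n W c w = (c, ps, es)"
    and range: "\<forall>i<L. w i \<in> {1..Q}"
  shows "\<forall>\<beta>\<in>probe_blocks n W ps es. Suc \<beta> div 6 < num_groups Q b"
proof
  fix \<beta> assume "\<beta> \<in> probe_blocks n W ps es"
  then obtain p where p: "p \<in> flat_segments W es \<times> {..<n div 2}" and \<beta>: "\<beta> = predicted_block n ps es p"
    unfolding probe_blocks_def by blast
  define i where "i = probe_position n p"
  note bounds = probe_block_bounds[OF \<open>0 < n\<close> \<open>W * n + 2 \<le> L\<close> sketch p, folded i_def]
  have "Suc \<beta> \<le> block_index b (w (Suc i))"
    using bounds(2) block_index_Suc[OF bounds(1)] \<beta> by simp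
  then have "Suc \<beta> div 6 \<le> block_index b (w (Suc i)) div 6" by (rule div_le_mono)
  also have "\<dots> < num_groups Q b"
    using range bounds(1) by (intro block_index_div_6_less_num_groups b_pos) auto
  finally show "Suc \<beta> div 6 < num_groups Q b" .
qed

lemma mem_sketch_event:
  assumes "0 < n" and "W * n + 2 \<le> L"
    and mono: "\<forall>i<L. block_coloring b \<gamma> \<rho> (w i) = c"
    and hyp: "\<forall>i<3. \<forall>x\<in>{1..b}. \<gamma> i x \<in> {0,1,2} - {i}"
  shows "\<rho> \<in> sketch_event n W (wave_sketch b n W c w)"
proof -
  define ps where "ps = map (anchor b n w) [0..<Suc W]"
  define es where "es = map (\<lambda>s. slope b n w (s * n)) [0..<Suc W]"
  have sketch: "wave_sketch b n W c w = (c, ps, es)" by (simp add: wave_sketch_def ps_def es_def)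
  have "admits_color \<rho> c \<beta>" if \<beta>_mem: "\<beta> \<in> probe_blocks n W ps es" for \<beta>
  proof -
    obtain p where p: "p \<in> flat_segments W es \<times> {..<n div 2}" and \<beta>: "\<beta> = predicted_block n ps es p"
      using \<beta>_mem unfolding probe_blocks_def by blast
    define i where "i = probe_position n p"
    note bounds = probe_block_bounds[OF \<open>0 < n\<close> \<open>W * n + 2 \<le> L\<close> sketch p, folded i_def]
    have "block_coloring b \<gamma> \<rho> (w i) = c" using mono bounds(1) by simp
    then have "c \<noteq> missing_color \<rho> (block_index b (w i))"
      using block_coloring_avoids_missing_color(1)[OF b_pos hyp, of \<rho> "w i"] by simp
    moreover have "block_index b (w i) = \<beta> \<or> block_index b (w i) = Suc \<beta>"
      using bounds(2,3) \<beta> by linarith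
    ultimately show ?thesis by (auto simp: admits_color_def)
  qed
  then show ?thesis unfolding sketch sketch_event_def by simp
qed

lemma card_sketch_event_le:
  assumes "0 < n" and "even n" and "W * n + 2 \<le> L" and "slope b n w (L - 2) \<le> V" and "c < 3"
    and range: "\<forall>i<L. w i \<in> {1..Q}"
  shows "real (card (row_space (num_groups Q b) \<inter> sketch_event n W (wave_sketch b n W c w)))
    \<le> (8/9) ^ (n div 2 * (W - V)) * real (card (row_space (num_groups Q b)))"
proof -
  define ps where "ps = map (anchor b n w) [0..<Suc W]"
  define es where "es = map (\<lambda>s. slope b n w (s * n)) [0..<Suc W]"
  have sketch: "wave_sketch b n W c w = (c, ps, es)" by (simp add: wave_sketch_def ps_def es_def)
  have "(c, ps, es) \<in> sketches Q V W"
    using wave_sketch_mem_sketches[OF \<open>0 < n\<close> assms(3,4,5)] range unfolding sketch by simp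
  then have "n div 2 * (W - V) \<le> card (probe_blocks n W ps es)"
    using card_flat_segments_ge probe_blocks_separated(2)[OF \<open>0 < n\<close> \<open>even n\<close> assms(3) sketch] by simp
  then have fewer: "(8/9::real) ^ card (probe_blocks n W ps es) \<le> (8/9) ^ (n div 2 * (W - V))"
    by (rule power_decreasing) simp_all
  have event_eq: "row_space (num_groups Q b) \<inter> sketch_event n W (wave_sketch b n W c w)
      = {\<rho>\<in>row_space (num_groups Q b). \<forall>\<beta>\<in>probe_blocks n W ps es. admits_color \<rho> c \<beta>}"
    unfolding sketch by (auto simp: sketch_event_def)
  have "finite (probe_blocks n W ps es)"
    unfolding probe_blocks_def flat_segments_def by simp
  then have "real (card {\<rho>\<in>row_space (num_groups Q b). \<forall>\<beta>\<in>probe_blocks n W ps es. admits_color \<rho> c \<beta>})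
      \<le> (8/9) ^ card (probe_blocks n W ps es) * real (card (row_space (num_groups Q b)))"
    using probe_blocks_in_range[OF \<open>0 < n\<close> assms(3) sketch range]
      probe_blocks_separated(1)[OF \<open>0 < n\<close> \<open>even n\<close> assms(3) sketch] \<open>c < 3\<close>
    by (intro card_admits_color_all_le) auto
  also have "\<dots> \<le> (8/9) ^ (n div 2 * (W - V)) * real (card (row_space (num_groups Q b)))"
    using fewer by (rule mult_right_mono) simp
  finally show ?thesis unfolding event_eq .
qed

end

section \<open>The union bound over sketches\<close>

lemma mono_wave_sketch_properties:
  fixes \<gamma> :: "nat \<Rightarrow> nat \<Rightarrow> nat"
  assumes "0 < b" and "0 < n" and "even n" and "W * n + 2 \<le> L"
    and hyp: "\<forall>i<3. \<forall>x\<in>{1..b}. \<gamma> i x \<in> {0,1,2} - {i}"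
    and wave: "mono_wave (block_coloring b \<gamma> \<rho>) Q L w" and "6 * b < w 1 - w 0"
    and last: "slope b n w (L - 2) \<le> V"
  defines "z \<equiv> wave_sketch b n W (block_coloring b \<gamma> \<rho> (w 0)) w"
  shows "z \<in> sketches Q V W" and "\<rho> \<in> sketch_event n W z"
    and "real (card (row_space (num_groups Q b) \<inter> sketch_event n W z))
      \<le> (8/9) ^ (n div 2 * (W - V)) * real (card (row_space (num_groups Q b)))"
proof -
  have "ascending_wave L w" and range: "\<forall>i<L. w i \<in> {1..Q}"
    and mono: "\<forall>i<L. block_coloring b \<gamma> \<rho> (w i) = block_coloring b \<gamma> \<rho> (w 0)"
    using wave unfolding mono_wave_def by blast+
  interpret steep_wave b L w
    using \<open>0 < b\<close> \<open>ascending_wave L w\<close> \<open>6 * b < w 1 - w 0\<close> by unfold_locales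
  have color: "block_coloring b \<gamma> \<rho> (w 0) < 3"
    by (rule block_coloring_avoids_missing_color(2)[OF \<open>0 < b\<close> hyp])
  show "z \<in> sketches Q V W"
    unfolding z_def using wave_sketch_mem_sketches[OF \<open>0 < n\<close> assms(4) last color] range by simp
  show "\<rho> \<in> sketch_event n W z"
    unfolding z_def by (rule mem_sketch_event[OF \<open>0 < n\<close> assms(4) mono hyp])
  show "real (card (row_space (num_groups Q b) \<inter> sketch_event n W z))
      \<le> (8/9) ^ (n div 2 * (W - V)) * real (card (row_space (num_groups Q b)))"
    unfolding z_def by (rule card_sketch_event_le[OF \<open>0 < n\<close> \<open>even n\<close> assms(4) last color range])
qed

lemma prob_steep_wave_le:
  fixes \<gamma> :: "nat \<Rightarrow> nat \<Rightarrow> nat"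
  assumes "0 < b" and "0 < n" and "even n" and "W * n + 2 \<le> L"
    and hyp: "\<forall>i<3. \<forall>x\<in>{1..b}. \<gamma> i x \<in> {0,1,2} - {i}"
  shows "measure_pmf.prob (row_choices (num_groups Q b))
      {\<rho>. \<exists>w. mono_wave (block_coloring b \<gamma> \<rho>) Q L w \<and> 6 * b < w 1 - w 0 \<and> slope b n w (L - 2) \<le> V}
    \<le> real (3 * (3 * Q + 1) * (V + 1) * 2 ^ (3 * W + 2 * V)) * (8/9) ^ (n div 2 * (W - V))"
    (is "measure_pmf.prob _ {\<rho>. \<exists>w. ?good \<rho> w} \<le> _ * ?q")
proof -
  define Z where "Z = {wave_sketch b n W (block_coloring b \<gamma> \<rho> (w 0)) w | \<rho> w. ?good \<rho> w}"
  note sketch_properties = mono_wave_sketch_properties[OF assms]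
  have "Z \<subseteq> sketches Q V W" unfolding Z_def using sketch_properties(1) by blast
  then have "finite Z" and "card Z \<le> 3 * (3 * Q + 1) * (V + 1) * 2 ^ (3 * W + 2 * V)"
    using card_sketches_le[of Q V W] card_mono[of "sketches Q V W" Z] finite_subset[of Z]
    by (blast, linarith)
  have "measure_pmf.prob (pmf_of_set (row_space (num_groups Q b))) {\<rho>. \<exists>w. ?good \<rho> w} \<le> real (card Z) * ?q"
  proof (rule prob_pmf_of_set_union_bound[where T = "sketch_event n W"])
    show "\<exists>z\<in>Z. \<rho> \<in> sketch_event n W z" if \<rho>: "\<rho> \<in> {\<rho>. \<exists>w. ?good \<rho> w}" for \<rho>
      using \<rho> sketch_properties(2) unfolding Z_def by blast
    show "real (card (row_space (num_groups Q b) \<inter> sketch_event n W z))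
        \<le> ?q * real (card (row_space (num_groups Q b)))" if "z \<in> Z" for z
      using that sketch_properties(3) unfolding Z_def by blast
    show "row_space (num_groups Q b) \<noteq> {}"
      using card_row_space_pos[of "num_groups Q b"] by auto
  qed (use \<open>finite Z\<close> finite_row_space in auto)
  also have "\<dots> \<le> real (3 * (3 * Q + 1) * (V + 1) * 2 ^ (3 * W + 2 * V)) * ?q"
    using \<open>card Z \<le> _\<close> by (intro mult_right_mono) (simp_all only: of_nat_le_iff, simp)
  finally show ?thesis unfolding row_choices_def .
qed

lemma real_div_minus_one_le_div: "real m / real d - 1 \<le> real (m div d)"
proof (cases "d = 0")
  case False
  have "real m = real d * real (m div d) + real (m mod d)"
    by (simp flip: of_nat_mult of_nat_add)
  moreover have "real (m mod d) < real d" using False by simp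
  ultimately show ?thesis using False by (simp add: field_simps)
qed simp

lemma slope_le_of_gap_less:
  fixes D :: nat
  assumes "0 < b" and "0 < D" and "D * gap w i < k * b"
  shows "slope b n w i \<le> 3 * n * k div D"
proof -
  have "b * (slope b n w i * D) = D * (b * slope b n w i)" by simp
  also have "\<dots> \<le> D * (3 * n * gap w i)"
    unfolding slope_def by (simp add: times_div_less_eq_dividend)
  also have "\<dots> = 3 * n * (D * gap w i)" by simp
  also have "\<dots> \<le> 3 * n * (k * b)" using assms(3) by simp
  also have "\<dots> = b * (3 * n * k)" by simp
  finally have "slope b n w i * D \<le> 3 * n * k" using \<open>0 < b\<close> by simp
  then show ?thesis using \<open>0 < D\<close> by (simp add: less_eq_div_iff_mult_less_eq)
qed

lemma last_gap_event_subset: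
  assumes "0 < b" and "2 \<le> L"
  shows "{\<rho>. \<exists>w. mono_wave (block_coloring b \<gamma> \<rho>) Q L w \<and> w 1 - w 0 > 6 * b
            \<and> real (w (L - 1) - w (L - 2)) < real k * real b / (4 * 10 ^ 14)}
      \<subseteq> {\<rho>. \<exists>w. mono_wave (block_coloring b \<gamma> \<rho>) Q L w \<and> 6 * b < w 1 - w 0
            \<and> slope b n w (L - 2) \<le> 3 * n * k div (4 * 10 ^ 14)}"
proof clarify
  fix \<rho> w assume "mono_wave (block_coloring b \<gamma> \<rho>) Q L w" "6 * b < w 1 - w 0"
    and last: "real (w (L - 1) - w (L - 2)) < real k * real b / (4 * 10 ^ 14)"
  have "real (4 * 10 ^ 14 * gap w (L - 2)) < real (k * b)"
    using last \<open>2 \<le> L\<close> by (simp add: gap_def Suc_diff_Suc numeral_2_eq_2 pos_less_divide_eq mult.commute)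
  then have "slope b n w (L - 2) \<le> 3 * n * k div (4 * 10 ^ 14)"
    by (intro slope_le_of_gap_less \<open>0 < b\<close>) (simp_all only: of_nat_less_iff, simp)
  then show "\<exists>w. mono_wave (block_coloring b \<gamma> \<rho>) Q L w \<and> 6 * b < w 1 - w 0
      \<and> slope b n w (L - 2) \<le> 3 * n * k div (4 * 10 ^ 14)"
    using \<open>mono_wave _ Q L w\<close> \<open>6 * b < w 1 - w 0\<close> by blast
qed

lemma sketch_prefactor_le:
  fixes Q V k :: nat
  assumes "1 \<le> k" and "Q \<le> k ^ 5" and "V \<le> k"
  shows "real (3 * (3 * Q + 1) * (V + 1)) \<le> 24 * real k ^ 6"
proof -
  have "real Q \<le> real k ^ 5" "1 \<le> real k ^ 5" "real V \<le> real k"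
    using assms by (simp_all flip: of_nat_power)
  then have "3 * real Q + 1 \<le> 4 * real k ^ 5" and "real V + 1 \<le> 2 * real k"
    using assms(1) by linarith+
  then have "3 * ((3 * real Q + 1) * (real V + 1)) \<le> 3 * ((4 * real k ^ 5) * (2 * real k))"
    by (intro mult_left_mono mult_mono) simp_all
  moreover have "real k ^ 6 = real k * real k ^ 5" by (subst power_Suc[symmetric]) simp
  ultimately show ?thesis by (simp add: algebra_simps)
qed

lemma sketch_decay_le:
  assumes "10 * V \<le> W"
  shows "(2::real) ^ (3 * W + 2 * V) * (8/9) ^ (50 * (W - V)) \<le> (1/2) ^ (4 * W)"
proof -
  have VW: "3 * W + 2 * V + 4 * W \<le> 8 * (W - V)" using assms by linarith
  have "(8/9::real) ^ (50 * (W - V)) \<le> (1/2) ^ (8 * (W - V))"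
    unfolding power_mult by (intro power_mono) (simp_all add: power_divide)
  then have "(2::real) ^ (3 * W + 2 * V) * (8/9) ^ (50 * (W - V))
      \<le> 2 ^ (3 * W + 2 * V) * (1/2) ^ (8 * (W - V))" by simp
  also have "\<dots> = (1/2) ^ (8 * (W - V) - (3 * W + 2 * V))"
    using VW by (simp add: power_diff power_one_over field_simps)
  also have "\<dots> \<le> (1/2) ^ (4 * W)"
    using VW by (intro power_decreasing) simp_all
  finally show ?thesis .
qed

lemma union_bound_estimate:
  fixes k :: nat
  assumes "1000 \<le> k"
  defines "Q \<equiv> k ^ 5 div (2 ^ 13 * 10 ^ 39)" and "W \<equiv> (k div 4 - 2) div 100"
    and "V \<equiv> 3 * 100 * k div (4 * 10 ^ 14)"
  shows "real (3 * (3 * Q + 1) * (V + 1) * 2 ^ (3 * W + 2 * V)) * (8/9) ^ (50 * (W - V))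
    \<le> 6144 * real k ^ 6 / 2 powr (real k / 100)"
proof -
  have W: "real k / 400 - 2 \<le> real W"
    using real_div_minus_one_le_div[of k 4] real_div_minus_one_le_div[of "k div 4 - 2" 100] assms(1)
    unfolding W_def by (simp add: of_nat_diff)
  have V: "real V \<le> 3 * real k / (4 * 10 ^ 12)"
    using of_nat_div_le_of_nat[of "3 * 100 * k" "4 * 10 ^ 14"] unfolding V_def by simp
  have "real (10 * V) \<le> real W" using W V assms(1) by simp
  then have decay: "(2::real) ^ (3 * W + 2 * V) * (8/9) ^ (50 * (W - V)) \<le> (1/2) ^ (4 * W)"
    by (intro sketch_decay_le) linarith
  have "V \<le> k" using V by (simp add: of_nat_le_iff[symmetric] del: of_nat_le_iff)
  then have prefactor: "real (3 * (3 * Q + 1) * (V + 1)) \<le> 24 * real k ^ 6"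
    using assms(1) by (intro sketch_prefactor_le) (simp_all add: Q_def)
  have "real (3 * (3 * Q + 1) * (V + 1) * 2 ^ (3 * W + 2 * V)) * (8/9) ^ (50 * (W - V))
      = real (3 * (3 * Q + 1) * (V + 1)) * ((2::real) ^ (3 * W + 2 * V) * (8/9) ^ (50 * (W - V)))"
    by (simp add: mult.assoc)
  also have "\<dots> \<le> 24 * real k ^ 6 * (1/2) ^ (4 * W)"
    by (rule mult_mono[OF prefactor decay]) simp_all
  also have "(1/2::real) ^ (4 * W) = 2 powr (- real (4 * W))"
    by (simp only: powr_minus powr_realpow[OF zero_less_numeral] power_one_over inverse_eq_divide)
  also have "\<dots> \<le> 2 powr (8 - real k / 100)" using W by (intro powr_mono) simp_all
  finally have "real (3 * (3 * Q + 1) * (V + 1) * 2 ^ (3 * W + 2 * V)) * (8/9) ^ (50 * (W - V))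
      \<le> 24 * real k ^ 6 * 2 powr (8 - real k / 100)"
    by (simp add: mult_left_mono)
  then show ?thesis by (simp add: powr_diff)
qed

lemma eventually_poly_exp_less_half:
  "\<forall>\<^sub>F x in at_top. 6144 * x ^ 6 / 2 powr (x / 100) < (1/2 :: real)"
proof -
  have "((\<lambda>x::real. 6144 * x ^ 6 / 2 powr (x / 100)) \<longlongrightarrow> 0) at_top" by real_asymp
  then show ?thesis by (rule order_tendstoD) simp
qed

lemma prob_wave_event_le:
  fixes \<gamma> :: "nat \<Rightarrow> nat \<Rightarrow> nat"
  assumes "1000 \<le> k" and hyp: "\<forall>i<3. \<forall>x\<in>{1..b}. \<gamma> i x \<in> {0,1,2} - {i}"
  defines "Q \<equiv> k ^ 5 div (2 ^ 13 * 10 ^ 39)" and "L \<equiv> k div 4"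
  shows "measure_pmf.prob (row_choices (num_groups Q b))
      {\<rho>. \<exists>w. mono_wave (block_coloring b \<gamma> \<rho>) Q L w \<and> w 1 - w 0 > 6 * b
        \<and> real (w (L - 1) - w (L - 2)) < real k * real b / (4 * 10 ^ 14)}
    \<le> 6144 * real k ^ 6 / 2 powr (real k / 100)"
proof (cases "b = 0")
  case True
  then show ?thesis by simp
next
  case False
  define W where "W = (L - 2) div 100"
  define V where "V = 3 * 100 * k div (4 * 10 ^ 14)"
  have "2 \<le> L" using \<open>1000 \<le> k\<close> unfolding L_def by linarith
  then have "W * 100 + 2 \<le> L"
    using div_times_less_eq_dividend[of "L - 2" 100] unfolding W_def by linarith
  have "measure_pmf.prob (row_choices (num_groups Q b))
      {\<rho>. \<exists>w. mono_wave (block_coloring b \<gamma> \<rho>) Q L w \<and> w 1 - w 0 > 6 * b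
        \<and> real (w (L - 1) - w (L - 2)) < real k * real b / (4 * 10 ^ 14)}
    \<le> measure_pmf.prob (row_choices (num_groups Q b))
      {\<rho>. \<exists>w. mono_wave (block_coloring b \<gamma> \<rho>) Q L w \<and> 6 * b < w 1 - w 0
        \<and> slope b 100 w (L - 2) \<le> V}"
    using last_gap_event_subset[where n = 100, OF _ \<open>2 \<le> L\<close>] False
    unfolding V_def by (intro measure_pmf.finite_measure_mono) simp_all
  also have "\<dots> \<le> real (3 * (3 * Q + 1) * (V + 1) * 2 ^ (3 * W + 2 * V)) * (8/9) ^ (100 div 2 * (W - V))"
    using False hyp \<open>W * 100 + 2 \<le> L\<close> by (intro prob_steep_wave_le) simp_all
  also have "\<dots> \<le> 6144 * real k ^ 6 / 2 powr (real k / 100)"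
    using union_bound_estimate[OF \<open>1000 \<le> k\<close>] by (simp add: Q_def W_def V_def L_def)
  finally show ?thesis .
qed

theorem lemma3p2:
  shows "\<forall>\<^sub>F k in sequentially.
    \<forall>\<gamma> :: nat \<Rightarrow> nat \<Rightarrow> nat.
      (let K = k div 80; b = AW K 2 - 1; Q = k ^ 5 div (2 ^ 13 * 10 ^ 39); L = k div 4 in
        (\<forall>i<3. (\<forall>x\<in>{1..b}. \<gamma> i x \<in> {0,1,2} - {i}) \<and> \<not> (\<exists>w. mono_wave (\<gamma> i) b K w))
        \<longrightarrow> measure_pmf.prob (row_choices (num_groups Q b))
              {\<rho>. \<exists>w. mono_wave (block_coloring b \<gamma> \<rho>) Q L w
                      \<and> w 1 - w 0 > 6 * b
                      \<and> real (w (L - 1) - w (L - 2)) < real k * real b / (4 * 10 ^ 14)}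
            < 1 / 2)"
proof -
  obtain N :: real where N: "\<And>x. N \<le> x \<Longrightarrow> 6144 * x ^ 6 / 2 powr (x / 100) < 1 / 2"
    using eventually_poly_exp_less_half by (auto simp: eventually_at_top_linorder)
  have large: "\<forall>\<^sub>F k in sequentially. 1000 \<le> k \<and> N \<le> real k"
    using eventually_ge_at_top filterlim_real_sequentially unfolding filterlim_at_top
    by (intro eventually_conj) auto
  show ?thesis
    by (rule eventually_mono[OF large], unfold Let_def, intro allI impI,
        rule order.strict_trans1[OF prob_wave_event_le N]) auto
qed

end
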